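(* Let $X$ be a completely subscalable nonnegative random variable with survival function $\overline{F}(x) = \mathbb{P}(X>x)$. Then $\overline{F}$ is continuous on $(0, \infty)$.
   Context: A nonnegative random variable $X$ with survival function $\overline{F}$ is called completely subscalable if $\theta \, \overline{F}(x) \leq \overline{F}(x/\theta)$ for all $x \geq 0$ and all $\theta \in (0,1)$. *)

theory Defs
  imports "HOL-Probability.Probability"
begin

definition surv :: "'a measure \<Rightarrow> ('a \<Rightarrow> real) \<Rightarrow> real \<Rightarrow> real" where
  "surv M X x = measure M {\<omega> \<in> space M. X \<omega> > x}"

definition completely_subscalable :: "'a measure \<Rightarrow> ('a \<Rightarrow> real) \<Rightarrow> bool" where
  "completely_subscalable M X \<longleftrightarrow>
     (\<forall>x::real. x \<ge> 0 \<longrightarrow> (\<forall>\<theta>::real. 0 < \<theta> \<and> \<theta> < 1 \<longrightarrow>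
        \<theta> * surv M X x \<le> surv M X (x / \<theta>)))"

end

theory Submission
  imports Defs
begin

text \<open>
  Let \<open>F\<close> be the distribution function of \<open>X\<close>, which is right-continuous, and fix \<open>x > 0\<close>.
  Subscalability at the point \<open>\<theta> x\<close> gives \<open>\<theta> (1 - F(\<theta> x)) \<le> 1 - F(x)\<close>.
  Letting \<open>\<theta> \<rightarrow> 1\<^sup>-\<close> turns \<open>F(\<theta> x)\<close> into \<open>P(X < x)\<close>, so \<open>P(X \<le> x) \<le> P(X < x)\<close>:
  \<open>X\<close> has no atom at \<open>x\<close>, and \<open>F\<close> is continuous there.
\<close>

lemma filterlim_scale_at_left_one:
  fixes x :: real
  assumes "x > 0"
  shows "filterlim (\<lambda>\<theta>. \<theta> * x) (at_left x) (at_left 1)"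
proof -
  have "((\<lambda>\<theta>. \<theta> * x) \<longlongrightarrow> 1 * x) (at_left 1)"
    by (intro tendsto_intros)
  moreover have "eventually (\<lambda>\<theta>. \<theta> * x < x) (at_left (1::real))"
    using assms eventually_at_left_real[of 0 1] by (auto elim!: eventually_mono)
  ultimately show ?thesis
    using tendsto_imp_filterlim_at_left by simp
qed

lemma (in real_distribution) isCont_cdf_if_scaled_tail_le:
  assumes "x > 0"
    and scaled_tail_le: "\<And>\<theta>. 0 < \<theta> \<Longrightarrow> \<theta> < 1 \<Longrightarrow> \<theta> * (1 - cdf M (\<theta> * x)) \<le> 1 - cdf M x"
  shows "isCont (cdf M) x"
proof -
  have "((\<lambda>\<theta>. cdf M (\<theta> * x)) \<longlongrightarrow> measure M {..<x}) (at_left 1)"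
    using filterlim_compose[OF cdf_at_left filterlim_scale_at_left_one[OF assms(1)]] .
  then have "((\<lambda>\<theta>. \<theta> * (1 - cdf M (\<theta> * x))) \<longlongrightarrow> 1 * (1 - measure M {..<x})) (at_left 1)"
    by (intro tendsto_intros)
  moreover have "\<forall>\<^sub>F \<theta> in at_left 1. \<theta> * (1 - cdf M (\<theta> * x)) \<le> 1 - cdf M x"
    using eventually_at_left_real[of 0 1] by (auto elim!: eventually_mono intro: scaled_tail_le)
  ultimately have "1 * (1 - measure M {..<x}) \<le> 1 - cdf M x"
    by (rule tendsto_upperbound) (simp add: trivial_limit_at_left_real)
  then have "measure M {..x} \<le> measure M {..<x}"
    by (simp add: cdf_def)
  moreover have "measure M {..x} = measure M {..<x} + measure M {x}"
    unfolding ivl_disj_un(2)[symmetric] by (subst finite_measure_Union) auto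
  ultimately have "measure M {x} = 0"
    using measure_nonneg[of M "{x}"] by linarith
  then show ?thesis
    using isCont_cdf by simp
qed

lemma (in prob_space) surv_eq_one_minus_cdf_distr:
  assumes "X \<in> borel_measurable M"
  shows "surv M X = (\<lambda>y. 1 - cdf (distr M borel X) y)"
proof
  fix y
  interpret D: real_distribution "distr M borel X"
    using assms by simp
  have "surv M X y = measure (distr M borel X) (UNIV - {..y})"
    unfolding surv_def using assms
    by (subst measure_distr) (auto simp: vimage_def Int_def conj_commute not_le)
  also have "\<dots> = 1 - cdf (distr M borel X) y"
    using D.prob_compl[of "{..y}"] by (simp add: cdf_def)
  finally show "surv M X y = 1 - cdf (distr M borel X) y" .
qed

lemma completely_subscalable_scaled_le:
  assumes "completely_subscalable M X" "x > 0" "0 < \<theta>" "\<theta> < 1"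
  shows "\<theta> * surv M X (\<theta> * x) \<le> surv M X x"
  using assms unfolding completely_subscalable_def
  by (metis less_eq_real_def mult_pos_pos nonzero_mult_div_cancel_left order_less_irrefl)

theorem lemma7:
  fixes M :: "'a measure" and X :: "'a \<Rightarrow> real"
  assumes "prob_space M"
    and "X \<in> borel_measurable M"
    and "AE \<omega> in M. X \<omega> \<ge> 0"
    and "completely_subscalable M X"
  shows "continuous_on {0<..} (surv M X)"
proof -
  interpret prob_space M by fact
  interpret D: real_distribution "distr M borel X"
    using assms(2) by simp
  have surv_eq: "surv M X = (\<lambda>y. 1 - cdf (distr M borel X) y)"
    using surv_eq_one_minus_cdf_distr[OF assms(2)] .
  have "isCont (cdf (distr M borel X)) x" if "x > 0" for x
    using D.isCont_cdf_if_scaled_tail_le[OF that]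
      completely_subscalable_scaled_le[OF assms(4) that]
    by (simp add: surv_eq)
  then show ?thesis
    unfolding surv_eq
    by (intro continuous_at_imp_continuous_on ballI continuous_intros) auto
qed

end
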